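(* Let $\mathcal{X}$ be an input space, $\mathcal{Y}=\{-1,1\}$, $\mathcal{D}$ a distribution on $\mathcal{X}\times\mathcal{Y}$ with marginal $\mathcal{P}_{\mathcal{X}}$, and $(x,y)\sim\mathcal{D}$ with $y$ the ground-truth label. Let $\mathcal{F},\mathcal{G}:\mathcal{X}\to\mathcal{Y}$ be classifiers, $\delta,\rho,\epsilon\in(0,1)$ constants, and $\mathcal{A}:\mathcal{X}\to\mathcal{X}$ an attack strategy. Suppose $\mathcal{A}$ is $\rho$-conservative and $\mathcal{F},\mathcal{G}$ have risk at most $\epsilon$. If $\mathcal{A}$ is $(\delta,\mathcal{F})$-effective, then it is also $(\delta+4\epsilon+\rho,\mathcal{G})$-effective.
   Context: Risk of $\mathcal{F}$: $\Pr(\mathcal{F}(x)\neq y)$. Let $\mathcal{P}_{\mathcal{A}(x)}$ denote the distribution of $\mathcal{A}(x)$ for $x\sim\mathcal{P}_{\mathcal{X}}$; $\mathcal{A}$ is $\rho$-conservative if $\sup_{C\subseteq\mathcal{X}}|\mathcal{P}_{\mathcal{X}}(C)-\mathcal{P}_{\mathcal{A}(x)}(C)|\le\rho$. The attack is $(\alpha,\mathcal{F})$-effective (untargeted) if $\Pr(\mathcal{F}(\mathcal{A}(x))\neq y)\ge 1-\alpha$. *)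

theory Defs
  imports "HOL-Probability.Probability"
begin

text \<open>D is a distribution on X \<times> Y (pairs (x,y)), MX the measurable space on X.
  Labels are integers; Y = {-1,1} is imposed by assumptions.\<close>

definition risk :: "('a \<times> int) measure \<Rightarrow> ('a \<Rightarrow> int) \<Rightarrow> real" where
  "risk D F = measure D {p \<in> space D. F (fst p) \<noteq> snd p}"

definition conservative ::
  "'a measure \<Rightarrow> ('a \<times> int) measure \<Rightarrow> ('a \<Rightarrow> 'a) \<Rightarrow> real \<Rightarrow> bool" where
  "conservative MX D A \<rho> \<longleftrightarrow>
     (\<forall>C \<in> sets MX. \<bar>measure (distr D MX fst) C - measure (distr D MX (\<lambda>p. A (fst p))) C\<bar> \<le> \<rho>)"

definition effective ::
  "('a \<times> int) measure \<Rightarrow> ('a \<Rightarrow> 'a) \<Rightarrow> real \<Rightarrow> ('a \<Rightarrow> int) \<Rightarrow> bool" where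
  "effective D A \<alpha> F \<longleftrightarrow> measure D {p \<in> space D. F (A (fst p)) \<noteq> snd p} \<ge> 1 - \<alpha>"

end

theory Submission
  imports Defs
begin

text \<open>The probability that two classifiers disagree is a pseudometric. On clean inputs \<open>F\<close>
  and \<open>G\<close> disagree with probability at most \<open>2\<epsilon>\<close> (triangle inequality through the true
  label); their disagreement set is a measurable set of inputs, so a \<open>\<rho>\<close>-conservative attack
  raises its probability by at most \<open>\<rho>\<close>. A last triangle inequality through \<open>G\<close> on attacked
  inputs shows that the attack loses at most \<open>2\<epsilon> + \<rho>\<close> of effectiveness, which is sharper than
  the stated \<open>4\<epsilon> + \<rho>\<close>.\<close>

definition disagreement :: "'a measure \<Rightarrow> ('a \<Rightarrow> 'b) \<Rightarrow> ('a \<Rightarrow> 'b) \<Rightarrow> real" where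
  "disagreement M f g = measure M {x \<in> space M. f x \<noteq> g x}"

lemma disagreement_commute: "disagreement M f g = disagreement M g f"
  unfolding disagreement_def by (metis (full_types))

lemma (in finite_measure) disagreement_triangle:
  fixes f g h :: "'a \<Rightarrow> 'b::countable"
  assumes "f \<in> M \<rightarrow>\<^sub>M count_space UNIV" "g \<in> M \<rightarrow>\<^sub>M count_space UNIV"
    and "h \<in> M \<rightarrow>\<^sub>M count_space UNIV"
  shows "disagreement M f h \<le> disagreement M f g + disagreement M g h"
proof -
  have "disagreement M f h
      \<le> measure M ({x \<in> space M. f x \<noteq> g x} \<union> {x \<in> space M. g x \<noteq> h x})"
    unfolding disagreement_def using assms by (intro finite_measure_mono) auto
  also have "\<dots> \<le> disagreement M f g + disagreement M g h"
    unfolding disagreement_def using assms by (intro measure_Un_le) auto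
  finally show ?thesis .
qed

lemma conservative_measure_le:
  assumes "conservative MX D A \<rho>" and "C \<in> sets MX"
    and "fst \<in> D \<rightarrow>\<^sub>M MX" and "A \<in> MX \<rightarrow>\<^sub>M MX"
  shows "measure D {p \<in> space D. A (fst p) \<in> C} \<le> measure D {p \<in> space D. fst p \<in> C} + \<rho>"
proof -
  have "(\<lambda>p. A (fst p)) \<in> D \<rightarrow>\<^sub>M MX"
    using assms(3,4) by measurable
  then have "measure (distr D MX (\<lambda>p. A (fst p))) C = measure D {p \<in> space D. A (fst p) \<in> C}"
    and "measure (distr D MX fst) C = measure D {p \<in> space D. fst p \<in> C}"
    using assms(2,3) by (auto simp: measure_distr vimage_def Int_def conj_commute)
  with assms(1,2) show ?thesis
    unfolding conservative_def by fastforce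
qed

lemma conservative_disagreement_le:
  fixes f g :: "'a \<Rightarrow> 'b::countable"
  assumes "conservative MX D A \<rho>"
    and "fst \<in> D \<rightarrow>\<^sub>M MX" and "A \<in> MX \<rightarrow>\<^sub>M MX"
    and "f \<in> MX \<rightarrow>\<^sub>M count_space UNIV" and "g \<in> MX \<rightarrow>\<^sub>M count_space UNIV"
  shows "disagreement D (\<lambda>p. f (A (fst p))) (\<lambda>p. g (A (fst p)))
    \<le> disagreement D (\<lambda>p. f (fst p)) (\<lambda>p. g (fst p)) + \<rho>"
proof -
  define C where "C = {x \<in> space MX. f x \<noteq> g x}"
  have C: "C \<in> sets MX"
    unfolding C_def using assms(4,5) by measurable
  have "{p \<in> space D. f (A (fst p)) \<noteq> g (A (fst p))} = {p \<in> space D. A (fst p) \<in> C}"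
    and "{p \<in> space D. fst p \<in> C} = {p \<in> space D. f (fst p) \<noteq> g (fst p)}"
    using measurable_space[OF assms(2)] measurable_space[OF assms(3)] by (auto simp: C_def)
  with conservative_measure_le[OF assms(1) C assms(2,3)] show ?thesis
    unfolding disagreement_def by simp
qed

theorem theorem5:
  fixes MX :: "'a measure" and D :: "('a \<times> int) measure"
    and F G :: "'a \<Rightarrow> int" and A :: "'a \<Rightarrow> 'a" and \<delta> \<rho> \<epsilon> :: real
  assumes "prob_space D"
    and "sets D = sets (MX \<Otimes>\<^sub>M count_space UNIV)"
    and "AE p in D. snd p \<in> {-1, 1}"
    and "F \<in> MX \<rightarrow>\<^sub>M count_space UNIV" and "G \<in> MX \<rightarrow>\<^sub>M count_space UNIV"
    and "\<forall>x \<in> space MX. F x \<in> {-1, 1}" and "\<forall>x \<in> space MX. G x \<in> {-1, 1}"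
    and "A \<in> MX \<rightarrow>\<^sub>M MX"
    and "\<delta> \<in> {0<..<1}" and "\<rho> \<in> {0<..<1}" and "\<epsilon> \<in> {0<..<1}"
    and "conservative MX D A \<rho>"
    and "risk D F \<le> \<epsilon>" and "risk D G \<le> \<epsilon>"
    and "effective D A \<delta> F"
  shows "effective D A (\<delta> + 4 * \<epsilon> + \<rho>) G"
proof -
  interpret prob_space D by fact
  have fst: "fst \<in> D \<rightarrow>\<^sub>M MX" and snd: "snd \<in> D \<rightarrow>\<^sub>M count_space UNIV"
    using measurable_cong_sets[OF assms(2) refl] by auto
  have F: "(\<lambda>p. F (fst p)) \<in> D \<rightarrow>\<^sub>M count_space UNIV"
    using fst assms(4) by measurable
  have G: "(\<lambda>p. G (fst p)) \<in> D \<rightarrow>\<^sub>M count_space UNIV"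
    using fst assms(5) by measurable
  have FA: "(\<lambda>p. F (A (fst p))) \<in> D \<rightarrow>\<^sub>M count_space UNIV"
    using fst assms(4,8) by measurable
  have GA: "(\<lambda>p. G (A (fst p))) \<in> D \<rightarrow>\<^sub>M count_space UNIV"
    using fst assms(5,8) by measurable
  have risk: "risk D H = disagreement D (\<lambda>p. H (fst p)) snd" for H :: "'a \<Rightarrow> int"
    by (simp add: risk_def disagreement_def)
  have eff: "effective D A \<alpha> H \<longleftrightarrow> 1 - \<alpha> \<le> disagreement D (\<lambda>p. H (A (fst p))) snd" for \<alpha> H
    by (simp add: effective_def disagreement_def)
  have "disagreement D (\<lambda>p. F (fst p)) (\<lambda>p. G (fst p))
      \<le> disagreement D (\<lambda>p. F (fst p)) snd + disagreement D snd (\<lambda>p. G (fst p))"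
    using F snd G by (rule disagreement_triangle)
  then have "disagreement D (\<lambda>p. F (fst p)) (\<lambda>p. G (fst p)) \<le> risk D F + risk D G"
    by (simp add: risk disagreement_commute[of D snd])
  moreover have "disagreement D (\<lambda>p. F (A (fst p))) (\<lambda>p. G (A (fst p)))
      \<le> disagreement D (\<lambda>p. F (fst p)) (\<lambda>p. G (fst p)) + \<rho>"
    using assms(12) fst assms(8,4,5) by (rule conservative_disagreement_le)
  moreover have "disagreement D (\<lambda>p. F (A (fst p))) snd
      \<le> disagreement D (\<lambda>p. F (A (fst p))) (\<lambda>p. G (A (fst p)))
        + disagreement D (\<lambda>p. G (A (fst p))) snd"
    using FA GA snd by (rule disagreement_triangle)
  ultimately show ?thesis
    using assms(11,13,14,15) unfolding eff by auto
qed

end
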